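(* Let $q=2^h$. In ${\rm PG}(4,q)$ with homogeneous coordinates $(X_1,\dots,X_5)$ let $\ell$ be the line $X_1=X_4=X_5=0$, $\Sigma$ the solid $X_1=0$, and $\mathcal H$ the hyperbolic quadric of $\Sigma$ with equation $X_2X_5+X_3X_4=0$. Let $\mathcal W(3,q)$ be the symplectic polar space of $\Sigma$ whose lines are the lines of $\Sigma$ that are totally isotropic for the alternating form $B(x,y)=x_2y_5+x_5y_2+x_3y_4+x_4y_3$ (these are the lines contained in $\mathcal H$ together with the lines of $\Sigma$ tangent to $\mathcal H$). Let $\mathcal T$ be the set of lines of $\mathcal W(3,q)$ having exactly one point in common with $\mathcal H\setminus\ell$. For $b\in{\rm GF}(q)$ let $$M_{1,b,1,0}=\begin{pmatrix}1&0&0&0&0\\0&1&0&b&0\\0&0&1&0&b\\0&0&0&1&0\\0&0&0&0&1\end{pmatrix},$$ and let $G_2=\{M_{1,b,1,0}: b\in{\rm GF}(q)\}$, acting on points (column vectors) by left multiplication. Then for every line $t\in\mathcal T$, the set $t^{G_2}\cup\{\ell\}$ is a regulus of $\Sigma$. *)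

theory Defs
  imports "HOL-Analysis.Finite_Cartesian_Product"
begin

text \<open>Vectors of GF(q)^5 (coordinates X1..X5 are the components 1,2,3,4,5 of type 5).
  Projective subspaces of PG(4,q) are represented by the corresponding linear subspaces
  of GF(q)^5 (sets of vectors); a projective point is a 1-dimensional subspace,
  a projective line is a 2-dimensional subspace.\<close>

definition vsmult :: "'a::field \<Rightarrow> 'a^5 \<Rightarrow> 'a^5" where
  "vsmult c x = (\<chi> i. c * x $ i)"

definition ppoint :: "('a::field)^5 \<Rightarrow> ('a^5) set" where
  "ppoint x = {vsmult c x | c. True}"

definition span2 :: "('a::field)^5 \<Rightarrow> 'a^5 \<Rightarrow> ('a^5) set" where
  "span2 x y = {vsmult a x + vsmult b y | a b. True}"

definition is_pline :: "('a::field ^5) set \<Rightarrow> bool" where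
  "is_pline L \<longleftrightarrow> (\<exists>x y. L = span2 x y \<and>
      (\<forall>a b. vsmult a x + vsmult b y = 0 \<longrightarrow> a = 0 \<and> b = 0))"

definition meets :: "('a::field ^5) set \<Rightarrow> ('a^5) set \<Rightarrow> bool" where
  "meets L M \<longleftrightarrow> (\<exists>x. x \<noteq> 0 \<and> x \<in> L \<and> x \<in> M)"

definition Sigma_solid :: "('a::field ^5) set" where
  "Sigma_solid = {x. x $ 1 = 0}"

definition ell :: "('a::field ^5) set" where
  "ell = {x. x $ 1 = 0 \<and> x $ 4 = 0 \<and> x $ 5 = 0}"

definition solid_line :: "('a::field ^5) set \<Rightarrow> bool" where
  "solid_line L \<longleftrightarrow> is_pline L \<and> L \<subseteq> Sigma_solid"

definition Hq :: "('a::field ^5) set" where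
  "Hq = {x. x \<in> Sigma_solid \<and> x \<noteq> 0 \<and> x $ 2 * x $ 5 + x $ 3 * x $ 4 = 0}"

definition Bform :: "('a::field)^5 \<Rightarrow> 'a^5 \<Rightarrow> 'a" where
  "Bform x y = x $ 2 * y $ 5 + x $ 5 * y $ 2 + x $ 3 * y $ 4 + x $ 4 * y $ 3"

definition W_line :: "('a::field ^5) set \<Rightarrow> bool" where
  "W_line L \<longleftrightarrow> solid_line L \<and> (\<forall>x\<in>L. \<forall>y\<in>L. Bform x y = 0)"

definition T_lines :: "(('a::field ^5) set) set" where
  "T_lines = {t. W_line t \<and>
      card {ppoint x | x. x \<in> t \<and> x \<in> Hq \<and> x \<notin> ell} = 1}"

definition Mb :: "'a::field \<Rightarrow> 'a^5^5" where
  "Mb b = (\<chi> i j. if i = j then 1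
                 else if (i = 2 \<and> j = 4) \<or> (i = 3 \<and> j = 5) then b else 0)"

definition G2_orbit :: "('a::field ^5) set \<Rightarrow> (('a^5) set) set" where
  "G2_orbit t = {(\<lambda>x. Mb b *v x) ` t | b. True}"

definition transversals :: "('a::field ^5) set \<Rightarrow> ('a^5) set \<Rightarrow> ('a^5) set \<Rightarrow> (('a^5) set) set" where
  "transversals l1 l2 l3 = {m. solid_line m \<and> meets m l1 \<and> meets m l2 \<and> meets m l3}"

definition is_regulus :: "(('a::field ^5) set) set \<Rightarrow> bool" where
  "is_regulus R \<longleftrightarrow> (\<exists>l1 l2 l3. solid_line l1 \<and> solid_line l2 \<and> solid_line l3 \<and>
      \<not> meets l1 l2 \<and> \<not> meets l1 l3 \<and> \<not> meets l2 l3 \<and>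
      R = {L. solid_line L \<and> (\<forall>m \<in> transversals l1 l2 l3. meets L m)})"

end

theory Submission
  imports Defs
begin

text \<open>Write \<open>N z = (0, z\<^sub>4, z\<^sub>5, 0, 0)\<close> (\<open>shift_dir\<close> below), so that
  \<open>M\<^sub>b z = z + b N z\<close> with \<open>N z \<in> \<ell>\<close>.
  A line \<open>t\<close> of \<open>\<T>\<close> is skew to \<open>\<ell>\<close>: a common point \<open>z\<close> and the point \<open>w\<close> of \<open>t \<inter> \<H>\<close>
  off \<open>\<ell>\<close> would give a second such point \<open>z + w\<close>, because \<open>Q(z + w) = Q z + Q w + B(z, w) = 0\<close>.
  For \<open>t\<close> skew to \<open>\<ell>\<close> the transversals of \<open>\<ell>\<close>, \<open>t\<close> and \<open>M\<^sub>1 t\<close> are exactly the lines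
  \<open>\<langle>N z, z\<rangle>\<close>, \<open>z \<in> t\<close>, and such a line meets \<open>M\<^sub>b t\<close> in \<open>M\<^sub>b z\<close>. Conversely, in the basis
  \<open>N x, N y, x, y\<close> of \<open>\<Sigma>\<close> (where \<open>t = \<langle>x, y\<rangle>\<close>), a line meeting the transversals through
  \<open>x\<close>, \<open>y\<close> and \<open>x + y\<close> is seen to be \<open>\<ell>\<close> or some \<open>M\<^sub>b t\<close>. Neither argument uses the
  characteristic.\<close>

lemma exhaust_5:
  fixes i :: 5
  shows "i = 1 \<or> i = 2 \<or> i = 3 \<or> i = 4 \<or> i = 5"
proof (induct i)
  case (of_int z)
  then have "z = 0 \<or> z = 1 \<or> z = 2 \<or> z = 3 \<or> z = 4" by fastforce
  then show ?case by auto
qed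

lemma vec_eq_5_iff:
  "(x::'a^5) = y \<longleftrightarrow> x$1 = y$1 \<and> x$2 = y$2 \<and> x$3 = y$3 \<and> x$4 = y$4 \<and> x$5 = y$5"
proof
  assume "x$1 = y$1 \<and> x$2 = y$2 \<and> x$3 = y$3 \<and> x$4 = y$4 \<and> x$5 = y$5"
  then show "x = y" unfolding vec_eq_iff by (metis exhaust_5)
qed simp

lemma sum_UNIV_5: "sum (f::5 \<Rightarrow> 'a::comm_monoid_add) UNIV = f 1 + f 2 + f 3 + f 4 + f 5"
proof -
  have U: "UNIV = {1, 2, 3, 4, 5::5}" using exhaust_5 by auto
  show ?thesis unfolding U by (simp add: add.assoc)
qed

lemma vsmult_nth [simp]: "vsmult c x $ i = c * x $ i"
  by (simp add: vsmult_def)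

lemma vsmult_eq_0_iff [simp]: "vsmult c x = 0 \<longleftrightarrow> c = 0 \<or> x = 0"
  by (auto simp: vec_eq_iff)

lemma vsmult_1 [simp]: "vsmult 1 x = x"
  by (simp add: vec_eq_iff)

lemma vsmult_0 [simp]: "vsmult 0 x = 0"
  by (simp add: vec_eq_iff)

lemma Mb_mult_nth [simp]:
  "(Mb s *v z) $ 1 = z $ 1" "(Mb s *v z) $ 2 = z $ 2 + s * z $ 4"
  "(Mb s *v z) $ 3 = z $ 3 + s * z $ 5" "(Mb s *v z) $ 4 = z $ 4" "(Mb s *v z) $ 5 = z $ 5"
  unfolding matrix_vector_mult_def sum_UNIV_5 Mb_def by simp_all

lemma Mb_mult_nonzero: "z $ 4 \<noteq> 0 \<or> z $ 5 \<noteq> 0 \<Longrightarrow> Mb s *v z \<noteq> 0"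
  by (metis Mb_mult_nth(4,5) zero_index)

definition indep :: "('a::field)^5 \<Rightarrow> 'a^5 \<Rightarrow> bool" where
  "indep x y \<longleftrightarrow> (\<forall>a b. vsmult a x + vsmult b y = 0 \<longrightarrow> a = 0 \<and> b = 0)"

lemma indepD: "indep x y \<Longrightarrow> vsmult a x + vsmult b y = 0 \<Longrightarrow> a = 0 \<and> b = 0"
  unfolding indep_def by blast

lemma indep_nonzero:
  assumes "indep x y"
  shows "x \<noteq> 0" "y \<noteq> 0" "x + y \<noteq> 0"
  using indepD[OF assms, of 1 0] indepD[OF assms, of 0 1] indepD[OF assms, of 1 1] by auto

lemma indep_if_45:
  assumes "u $ 4 = 0" "u $ 5 = 0" "u \<noteq> 0" "v $ 4 \<noteq> 0 \<or> v $ 5 \<noteq> 0"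
  shows "indep u v"
  unfolding indep_def
proof (intro allI impI)
  fix a b
  assume h: "vsmult a u + vsmult b v = 0"
  then have "(vsmult a u + vsmult b v) $ 4 = 0" "(vsmult a u + vsmult b v) $ 5 = 0" by simp_all
  then have "b * v $ 4 = 0" "b * v $ 5 = 0" using assms(1,2) by simp_all
  then have "b = 0" using assms(4) by auto
  with h assms(3) show "a = 0 \<and> b = 0" by simp
qed

lemma indep_if_indep_45:
  assumes "\<And>c d. c * u$4 + d * v$4 = 0 \<Longrightarrow> c * u$5 + d * v$5 = 0 \<Longrightarrow> c = 0 \<and> d = 0"
  shows "indep u v"
  unfolding indep_def
proof (intro allI impI)
  fix a b
  assume "vsmult a u + vsmult b v = 0"
  then have "(vsmult a u + vsmult b v) $ 4 = 0" "(vsmult a u + vsmult b v) $ 5 = 0" by simp_all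
  then show "a = 0 \<and> b = 0" using assms[of a b] by simp
qed

lemma span2_memI: "z = vsmult a u + vsmult b v \<Longrightarrow> z \<in> span2 u v"
  unfolding span2_def by blast

lemma span2_memE:
  assumes "z \<in> span2 u v"
  obtains a b where "z = vsmult a u + vsmult b v"
  using assms unfolding span2_def by blast

lemma span2_generators: "u \<in> span2 u v" "v \<in> span2 u v" "u + v \<in> span2 u v"
  using span2_memI[of u 1 u 0 v] span2_memI[of v 0 u 1 v] span2_memI[of "u + v" 1 u 1 v]
  by simp_all

lemma span2_add: "z \<in> span2 u v \<Longrightarrow> w \<in> span2 u v \<Longrightarrow> z + w \<in> span2 u v"
proof (elim span2_memE)
  fix a b c d assume "z = vsmult a u + vsmult b v" "w = vsmult c u + vsmult d v"
  then show "z + w \<in> span2 u v"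
    by (intro span2_memI[where a = "a + c" and b = "b + d"]) (simp add: vec_eq_iff algebra_simps)
qed

lemma span2_smult: "z \<in> span2 u v \<Longrightarrow> vsmult c z \<in> span2 u v"
proof (elim span2_memE)
  fix a b assume "z = vsmult a u + vsmult b v"
  then show "vsmult c z \<in> span2 u v"
    by (intro span2_memI[where a = "c * a" and b = "c * b"]) (simp add: vec_eq_iff algebra_simps)
qed

lemma span2_eq_if_indep:
  assumes L: "L = span2 x y" and P: "P \<in> L" and Q: "Q \<in> L" and PQ: "indep P Q"
  shows "L = span2 P Q"
proof -
  obtain a b where Pd: "P = vsmult a x + vsmult b y" using P L by (auto elim: span2_memE)
  obtain c d where Qd: "Q = vsmult c x + vsmult d y" using Q L by (auto elim: span2_memE)
  define D where "D = a * d - b * c"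
  have D: "D \<noteq> 0"
  proof
    assume "D = 0"
    then have "vsmult d P + vsmult (- b) Q = 0" "vsmult (- c) P + vsmult a Q = 0"
      unfolding Pd Qd D_def vec_eq_iff by (simp_all add: algebra_simps)
    then have "a = 0" "b = 0" using indepD[OF PQ, of d "- b"] indepD[OF PQ, of "- c" a] by auto
    then have "P = 0" unfolding Pd by simp
    with indep_nonzero(1)[OF PQ] show False by simp
  qed
  show ?thesis
  proof (intro set_eqI iffI)
    fix z assume "z \<in> L"
    then obtain e f where zd: "z = vsmult e x + vsmult f y" using L by (auto elim: span2_memE)
    have "z = vsmult ((e*d - f*c) / D) P + vsmult ((f*a - e*b) / D) Q"
    unfolding vec_eq_iff
    proof
      fix i
      have "D * z$i = (e*d - f*c) * P$i + (f*a - e*b) * Q$i"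
        unfolding zd Pd Qd D_def by (simp add: algebra_simps)
      then have "z$i = ((e*d - f*c) * P$i + (f*a - e*b) * Q$i) / D"
        using D by (simp add: eq_divide_eq mult.commute)
      then show "z$i = (vsmult ((e*d - f*c) / D) P + vsmult ((f*a - e*b) / D) Q) $ i"
        by (simp add: add_divide_distrib)
    qed
    then show "z \<in> span2 P Q" by (rule span2_memI)
  next
    fix z assume "z \<in> span2 P Q"
    then obtain g k where "z = vsmult g P + vsmult k Q" by (rule span2_memE)
    then have "z = vsmult (g*a + k*c) x + vsmult (g*b + k*d) y"
      unfolding Pd Qd vec_eq_iff by (simp add: algebra_simps)
    then show "z \<in> L" unfolding L by (rule span2_memI)
  qed
qed

lemma solid_lineE:
  assumes "solid_line L"
  obtains x y where "L = span2 x y" "indep x y" "x $ 1 = 0" "y $ 1 = 0"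
proof -
  obtain x y where L: "L = span2 x y" and "indep x y"
    using assms unfolding solid_line_def is_pline_def indep_def by blast
  moreover have "L \<subseteq> Sigma_solid" using assms unfolding solid_line_def by simp
  then have "x $ 1 = 0" "y $ 1 = 0"
    using span2_generators(1,2) unfolding L Sigma_solid_def by blast+
  ultimately show ?thesis using that by blast
qed

lemma solid_line_span2I:
  assumes "indep x y" "x $ 1 = 0" "y $ 1 = 0"
  shows "solid_line (span2 x y)"
  unfolding solid_line_def is_pline_def
proof
  show "span2 x y \<subseteq> Sigma_solid"
    using assms(2,3) unfolding Sigma_solid_def by (auto elim: span2_memE)
qed (use assms(1) in \<open>auto simp: indep_def\<close>)

definition shift_dir :: "('a::field)^5 \<Rightarrow> 'a^5" where
  "shift_dir z = (\<chi> i. if i = 2 then z$4 else if i = 3 then z$5 else 0)"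

lemma shift_dir_nth [simp]:
  "shift_dir z $ 1 = 0" "shift_dir z $ 2 = z $ 4" "shift_dir z $ 3 = z $ 5"
  "shift_dir z $ 4 = 0" "shift_dir z $ 5 = 0"
  by (simp_all add: shift_dir_def)

lemma shift_dir_0 [simp]: "shift_dir 0 = 0"
  by (simp add: vec_eq_5_iff)

lemma Mb_mult_eq: "Mb s *v z = z + vsmult s (shift_dir z)"
  by (simp add: vec_eq_5_iff)

lemma shift_dir_in_ell: "shift_dir z \<in> ell"
  by (simp add: ell_def)

lemma shift_dir_nonzero: "z $ 4 \<noteq> 0 \<or> z $ 5 \<noteq> 0 \<Longrightarrow> shift_dir z \<noteq> 0"
  by (metis shift_dir_nth(2,3) zero_index)

lemma Mb_image_span2: "(\<lambda>z. Mb s *v z) ` span2 x y = span2 (Mb s *v x) (Mb s *v y)"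
proof -
  have lin: "Mb s *v (vsmult a x + vsmult b y) = vsmult a (Mb s *v x) + vsmult b (Mb s *v y)" for a b
    by (simp add: vec_eq_5_iff algebra_simps)
  show ?thesis
    unfolding span2_def lin[symmetric] by blast
qed

lemma ell_eq_span2: "ell = span2 (axis 2 1) (axis 3 1)"
proof (intro set_eqI iffI)
  fix z :: "'a^5" assume "z \<in> ell"
  then have "z = vsmult (z$2) (axis 2 1) + vsmult (z$3) (axis 3 1)"
    unfolding ell_def vec_eq_5_iff by (simp add: axis_def)
  then show "z \<in> span2 (axis 2 1) (axis 3 1)" by (rule span2_memI)
qed (auto simp: span2_def ell_def axis_def)

lemma indep_axis_2_3: "indep (axis 2 1 :: 'a::field^5) (axis 3 1)"
  unfolding indep_def by (auto simp: vec_eq_5_iff axis_def)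

lemma solid_line_ell: "solid_line (ell :: ('a::field^5) set)"
  unfolding ell_eq_span2 by (rule solid_line_span2I[OF indep_axis_2_3]) (simp_all add: axis_def)

subsection \<open>The regulus through a line skew to \<open>\<ell>\<close>\<close>

lemma collinear_frame_coeffs:
  fixes a1 a2 a3 b1 b2 b3 \<alpha> \<beta> :: "'a::field"
  assumes "a3 = \<alpha> * a1" "a3 = \<beta> * a2" "b3 = \<alpha> * b1" "b3 = \<beta> * b2" "a3 \<noteq> 0 \<or> b3 \<noteq> 0"
  obtains "b1 = 0" "b2 = 0" | s where "a1 = s * b1" "a2 = s * b2"
proof (cases "b3 = 0")
  case True
  then show ?thesis using assms that(1) by auto
next
  case False
  then have "\<beta> \<noteq> 0" "b1 \<noteq> 0" using assms by auto
  have "\<beta> * (a2 * b1) = \<beta> * (a1 * b2)"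
    using assms(1-4) by (metis mult.assoc mult.left_commute)
  then have "a2 = (a1 / b1) * b2" using \<open>\<beta> \<noteq> 0\<close> \<open>b1 \<noteq> 0\<close> by (simp add: field_simps)
  moreover have "a1 = (a1 / b1) * b1" using \<open>b1 \<noteq> 0\<close> by simp
  ultimately show ?thesis using that(2) by blast
qed

text \<open>The hypothesis \<open>indep_45\<close> says that \<open>\<langle>x, y\<rangle>\<close> meets \<open>\<ell>\<close> only in \<open>0\<close>.\<close>

locale skew_pair =
  fixes x y :: "'a::field ^5"
  assumes x_Sigma: "x $ 1 = 0" and y_Sigma: "y $ 1 = 0"
    and indep_45: "\<And>c d. c * x$4 + d * y$4 = 0 \<Longrightarrow> c * x$5 + d * y$5 = 0 \<Longrightarrow> c = 0 \<and> d = 0"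
begin

lemma coeffs_eq_if_45:
  "c * x$4 + d * y$4 = e * x$4 + f * y$4 \<Longrightarrow> c * x$5 + d * y$5 = e * x$5 + f * y$5 \<Longrightarrow> c = e \<and> d = f"
  using indep_45[of "c - e" "d - f"] by (simp add: algebra_simps)

lemma indep_xy: "indep x y"
  using indep_45 by (rule indep_if_indep_45)

lemma span2_Sigma: "z \<in> span2 x y \<Longrightarrow> z $ 1 = 0"
  using x_Sigma y_Sigma by (auto elim: span2_memE)

lemma span2_eq_if_45:
  assumes "z \<in> span2 x y" "z' \<in> span2 x y" "z $ 4 = z' $ 4" "z $ 5 = z' $ 5"
  shows "z = z'"
proof -
  obtain a b where zd: "z = vsmult a x + vsmult b y" using assms(1) by (rule span2_memE)
  obtain c d where zd': "z' = vsmult c x + vsmult d y" using assms(2) by (rule span2_memE)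
  have "a = c \<and> b = d" using assms(3,4) coeffs_eq_if_45[of a b c d] unfolding zd zd' by simp
  then show ?thesis unfolding zd zd' by simp
qed

lemma span2_45_nonzero:
  assumes "z \<in> span2 x y" "z \<noteq> 0"
  shows "z $ 4 \<noteq> 0 \<or> z $ 5 \<noteq> 0"
proof (rule ccontr)
  assume "\<not> (z $ 4 \<noteq> 0 \<or> z $ 5 \<noteq> 0)"
  moreover have "0 \<in> span2 x y" by (rule span2_memI[of 0 0 x 0 y]) simp
  ultimately have "z = 0" using span2_eq_if_45[OF assms(1)] by simp
  with assms(2) show False ..
qed

definition orbit_line :: "'a \<Rightarrow> ('a^5) set" where
  "orbit_line s = (\<lambda>z. Mb s *v z) ` span2 x y"

lemma orbit_line_0: "orbit_line 0 = span2 x y"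
proof -
  have "Mb 0 *v z = z" for z :: "'a^5" by (simp add: Mb_mult_eq)
  then show ?thesis unfolding orbit_line_def by simp
qed

lemma indep_Mb_mult: "indep (Mb s *v x) (Mb s *v y)"
  by (rule indep_if_indep_45, rule indep_45) simp_all

lemma orbit_line_eq: "orbit_line s = span2 (Mb s *v x) (Mb s *v y)"
  unfolding orbit_line_def by (rule Mb_image_span2)

lemma solid_line_orbit_line: "solid_line (orbit_line s)"
  unfolding orbit_line_eq using indep_Mb_mult by (rule solid_line_span2I) (simp_all add: x_Sigma y_Sigma)

lemma ell_skew_orbit_line: "\<not> meets ell (orbit_line s)"
proof
  assume "meets ell (orbit_line s)"
  then obtain z where z: "z \<in> span2 x y" "Mb s *v z \<noteq> 0" "Mb s *v z \<in> ell"
    unfolding meets_def orbit_line_def by blast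
  then have "z $ 4 = 0" "z $ 5 = 0" unfolding ell_def by simp_all
  with span2_45_nonzero[OF z(1)] have "z = 0" by blast
  with z(2) show False by (simp add: Mb_mult_eq)
qed

lemma orbit_lines_skew:
  assumes "s \<noteq> s'"
  shows "\<not> meets (orbit_line s) (orbit_line s')"
proof
  assume "meets (orbit_line s) (orbit_line s')"
  then obtain z z' where z: "z \<in> span2 x y" "z' \<in> span2 x y"
    and w: "Mb s *v z = Mb s' *v z'" "Mb s *v z \<noteq> 0"
    unfolding meets_def orbit_line_def by auto
  have w_nth: "(Mb s *v z) $ i = (Mb s' *v z') $ i" for i using w(1) by simp
  have "z = z'" using span2_eq_if_45[OF z] w_nth[of 4] w_nth[of 5] by simp
  then have "(s - s') * z$4 = 0" "(s - s') * z$5 = 0"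
    using w_nth[of 2] w_nth[of 3] by (simp_all add: algebra_simps)
  then have "z = 0" using assms span2_45_nonzero[OF z(1)] by auto
  with w(2) show False by (simp add: Mb_mult_eq)
qed

definition transversal :: "'a^5 \<Rightarrow> ('a^5) set" where
  "transversal z = span2 (shift_dir z) z"

lemma transversal_in_transversals:
  assumes z: "z \<in> span2 x y" "z \<noteq> 0"
  shows "transversal z \<in> transversals ell (orbit_line 0) (orbit_line 1)"
proof -
  have z45: "z$4 \<noteq> 0 \<or> z$5 \<noteq> 0" using span2_45_nonzero z by blast
  have "indep (shift_dir z) z" using z45 shift_dir_nonzero by (intro indep_if_45) simp_all
  then have "solid_line (transversal z)"
    unfolding transversal_def using span2_Sigma[OF z(1)] by (intro solid_line_span2I) simp_all
  moreover have "meets (transversal z) ell"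
    unfolding meets_def transversal_def
    using span2_generators(1) shift_dir_in_ell shift_dir_nonzero[OF z45] by blast
  moreover have "meets (transversal z) (orbit_line 0)"
    unfolding meets_def transversal_def orbit_line_0 using span2_generators(2) z by blast
  moreover have "Mb 1 *v z \<in> transversal z"
    unfolding transversal_def Mb_mult_eq by (rule span2_memI[of _ 1 _ 1]) (simp add: add.commute)
  then have "meets (transversal z) (orbit_line 1)"
    unfolding meets_def orbit_line_def using z(1) Mb_mult_nonzero[OF z45] by blast
  ultimately show ?thesis unfolding transversals_def by blast
qed

text \<open>If a transversal \<open>m\<close> meets \<open>\<ell>\<close>, \<open>t\<close> and \<open>M\<^sub>1 t\<close> in \<open>z\<^sub>1\<close>, \<open>z\<^sub>2\<close> and \<open>M\<^sub>1 z'\<close>, then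
  comparing coordinates 4 and 5 gives \<open>z' = \<beta> z\<^sub>2\<close>, hence \<open>N z\<^sub>2 \<in> \<langle>z\<^sub>1\<rangle>\<close> and
  \<open>M\<^sub>s z\<^sub>2 = z\<^sub>2 + s N z\<^sub>2 \<in> m\<close>.\<close>

lemma orbit_line_meets_transversals:
  assumes "m \<in> transversals ell (orbit_line 0) (orbit_line 1)"
  shows "meets (orbit_line s) m"
proof -
  from assms have "solid_line m" and m: "meets m ell" "meets m (orbit_line 0)" "meets m (orbit_line 1)"
    unfolding transversals_def by auto
  obtain u v where muv: "m = span2 u v" using \<open>solid_line m\<close> by (meson solid_lineE)
  obtain z1 where z1: "z1 \<noteq> 0" "z1 \<in> m" "z1 \<in> ell" using m(1) unfolding meets_def by blast
  obtain z2 where z2: "z2 \<noteq> 0" "z2 \<in> m" "z2 \<in> span2 x y"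
    using m(2) unfolding meets_def orbit_line_0 by blast
  obtain z' where z': "z' \<in> span2 x y" "Mb 1 *v z' \<noteq> 0" "Mb 1 *v z' \<in> m"
    using m(3) unfolding meets_def orbit_line_def by blast
  have e1: "z1$1 = 0" "z1$4 = 0" "z1$5 = 0" using z1(3) unfolding ell_def by auto
  have z45: "z2$4 \<noteq> 0 \<or> z2$5 \<noteq> 0" using span2_45_nonzero z2 by blast
  have "m = span2 z1 z2"
    using muv z1(2) z2(2) indep_if_45[OF e1(2,3) z1(1) z45] by (rule span2_eq_if_indep)
  then obtain \<alpha> \<beta> where z3: "Mb 1 *v z' = vsmult \<alpha> z1 + vsmult \<beta> z2"
    using z'(3) by (auto elim: span2_memE)
  have z3_nth: "(Mb 1 *v z') $ i = \<alpha> * z1 $ i + \<beta> * z2 $ i" for i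
    using z3 by simp
  have z'_eq: "z' = vsmult \<beta> z2"
    using z3_nth[of 4] z3_nth[of 5] e1
    by (intro span2_eq_if_45[OF z'(1) span2_smult[OF z2(3)]]) simp_all
  have "\<beta> \<noteq> 0" using z'(2) unfolding z'_eq by (auto simp: Mb_mult_eq)
  have "vsmult \<alpha> z1 = vsmult \<beta> (shift_dir z2)"
    unfolding vec_eq_5_iff
    using z3_nth[of 1] z3_nth[of 2] z3_nth[of 3] z3_nth[of 4] z3_nth[of 5] e1
      span2_Sigma[OF z2(3)] by (simp add: z'_eq algebra_simps)
  then have "shift_dir z2 = vsmult (\<alpha> / \<beta>) z1"
    using \<open>\<beta> \<noteq> 0\<close> by (simp add: vec_eq_iff field_simps)
  then have "Mb s *v z2 = vsmult (s * \<alpha> / \<beta>) z1 + vsmult 1 z2"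
    unfolding Mb_mult_eq by (simp add: vec_eq_iff)
  then have "Mb s *v z2 \<in> m" unfolding \<open>m = span2 z1 z2\<close> by (rule span2_memI)
  moreover have "Mb s *v z2 \<in> orbit_line s" unfolding orbit_line_def using z2(3) by blast
  ultimately show ?thesis unfolding meets_def using Mb_mult_nonzero[OF z45] by blast
qed

text \<open>Coordinates with respect to the basis \<open>N x, N y, x, y\<close> of \<open>\<Sigma>\<close>.\<close>

definition frame :: "'a \<Rightarrow> 'a \<Rightarrow> 'a \<Rightarrow> 'a \<Rightarrow> 'a^5" where
  "frame c1 c2 c3 c4 =
     vsmult c1 (shift_dir x) + vsmult c2 (shift_dir y) + vsmult c3 x + vsmult c4 y"

lemma frame_nth:
  "frame c1 c2 c3 c4 $ 2 = c1 * x$4 + c2 * y$4 + c3 * x$2 + c4 * y$2"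
  "frame c1 c2 c3 c4 $ 3 = c1 * x$5 + c2 * y$5 + c3 * x$3 + c4 * y$3"
  "frame c1 c2 c3 c4 $ 4 = c3 * x$4 + c4 * y$4"
  "frame c1 c2 c3 c4 $ 5 = c3 * x$5 + c4 * y$5"
  by (simp_all add: frame_def)

lemma frame_inj:
  assumes "frame c1 c2 c3 c4 = frame d1 d2 d3 d4"
  shows "c1 = d1 \<and> c2 = d2 \<and> c3 = d3 \<and> c4 = d4"
proof -
  have h: "frame c1 c2 c3 c4 $ i = frame d1 d2 d3 d4 $ i" for i using assms by simp
  have 34: "c3 = d3 \<and> c4 = d4"
    using h[of 4] h[of 5] coeffs_eq_if_45 unfolding frame_nth by blast
  then have "c1 * x$4 + c2 * y$4 = d1 * x$4 + d2 * y$4" "c1 * x$5 + c2 * y$5 = d1 * x$5 + d2 * y$5"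
    using h[of 2] h[of 3] unfolding frame_nth by simp_all
  then show ?thesis using 34 coeffs_eq_if_45 by blast
qed

lemma frame_0: "frame 0 0 0 0 = 0"
  by (simp add: frame_def)

lemma frame_comb:
  "vsmult \<alpha> (frame a1 a2 b1 b2) + vsmult \<beta> (frame c1 c2 d1 d2)
     = frame (\<alpha> * a1 + \<beta> * c1) (\<alpha> * a2 + \<beta> * c2) (\<alpha> * b1 + \<beta> * d1) (\<alpha> * b2 + \<beta> * d2)"
  by (simp add: frame_def vec_eq_iff algebra_simps)

lemma indep_frame:
  assumes "a1 \<noteq> 0 \<or> b1 \<noteq> 0" "a2 \<noteq> 0 \<or> b2 \<noteq> 0"
  shows "indep (frame a1 0 b1 0) (frame 0 a2 0 b2)"
  unfolding indep_def
proof (intro allI impI)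
  fix \<alpha> \<beta>
  assume "vsmult \<alpha> (frame a1 0 b1 0) + vsmult \<beta> (frame 0 a2 0 b2) = 0"
  then have "frame (\<alpha> * a1) (\<beta> * a2) (\<alpha> * b1) (\<beta> * b2) = frame 0 0 0 0"
    unfolding frame_comb frame_0 by simp
  then show "\<alpha> = 0 \<and> \<beta> = 0" using frame_inj assms by fastforce
qed

lemma transversal_eq_frame:
  "transversal x = {frame a 0 b 0 | a b. True}"
  "transversal y = {frame 0 a 0 b | a b. True}"
  "transversal (x + y) = {frame a a b b | a b. True}"
  unfolding transversal_def span2_def frame_def
  by (simp_all add: vec_eq_iff algebra_simps shift_dir_def)

lemma ell_frame: "frame a1 a2 0 0 \<in> ell"
  by (simp add: ell_def frame_def x_Sigma y_Sigma)

lemma orbit_line_frame: "frame (s * b) 0 b 0 \<in> orbit_line s" "frame 0 (s * b) 0 b \<in> orbit_line s"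
  unfolding orbit_line_eq
  by (rule span2_memI[of _ b _ 0] span2_memI[of _ 0 _ b],
      simp add: frame_def vec_eq_5_iff algebra_simps)+

lemma line_meeting_transversals:
  assumes "solid_line L" and meets_all: "\<forall>m \<in> transversals ell (orbit_line 0) (orbit_line 1). meets L m"
  shows "L = ell \<or> (\<exists>s. L = orbit_line s)"
proof -
  have meets_tr: "meets L (transversal z)" if "z \<in> span2 x y" "z \<noteq> 0" for z
    using meets_all transversal_in_transversals[OF that] by blast
  obtain a1 b1 where P1: "frame a1 0 b1 0 \<in> L" "frame a1 0 b1 0 \<noteq> 0"
    using meets_tr[OF span2_generators(1) indep_nonzero(1)[OF indep_xy]]
    unfolding meets_def transversal_eq_frame by blast
  obtain a2 b2 where P2: "frame 0 a2 0 b2 \<in> L" "frame 0 a2 0 b2 \<noteq> 0"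
    using meets_tr[OF span2_generators(2) indep_nonzero(2)[OF indep_xy]]
    unfolding meets_def transversal_eq_frame by blast
  obtain a3 b3 where P3: "frame a3 a3 b3 b3 \<in> L" "frame a3 a3 b3 b3 \<noteq> 0"
    using meets_tr[OF span2_generators(3) indep_nonzero(3)[OF indep_xy]]
    unfolding meets_def transversal_eq_frame by blast
  have nz: "a1 \<noteq> 0 \<or> b1 \<noteq> 0" "a2 \<noteq> 0 \<or> b2 \<noteq> 0" "a3 \<noteq> 0 \<or> b3 \<noteq> 0"
    using P1(2) P2(2) P3(2) frame_0 by auto
  have P12: "indep (frame a1 0 b1 0) (frame 0 a2 0 b2)" using nz(1,2) by (rule indep_frame)
  obtain u v where "L = span2 u v" using \<open>solid_line L\<close> by (meson solid_lineE)
  then have L: "L = span2 (frame a1 0 b1 0) (frame 0 a2 0 b2)"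
    using P1(1) P2(1) P12 by (rule span2_eq_if_indep)
  then obtain \<alpha> \<beta> where "frame a3 a3 b3 b3 = frame (\<alpha> * a1) (\<beta> * a2) (\<alpha> * b1) (\<beta> * b2)"
    using P3(1) by (auto elim: span2_memE simp: frame_comb)
  then have "a3 = \<alpha> * a1" "a3 = \<beta> * a2" "b3 = \<alpha> * b1" "b3 = \<beta> * b2"
    using frame_inj by blast+
  then consider "b1 = 0" "b2 = 0" | s where "a1 = s * b1" "a2 = s * b2"
    using nz(3) by (rule collinear_frame_coeffs)
  then show ?thesis
  proof cases
    case 1
    have "ell = span2 (frame a1 0 b1 0) (frame 0 a2 0 b2)"
      using ell_eq_span2 ell_frame ell_frame P12 unfolding 1
      by (rule span2_eq_if_indep)
    then show ?thesis using L by simp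
  next
    case 2
    have "orbit_line s = span2 (frame a1 0 b1 0) (frame 0 a2 0 b2)"
      using orbit_line_eq orbit_line_frame P12
      unfolding 2 by (rule span2_eq_if_indep)
    then show ?thesis using L by blast
  qed
qed

theorem regulus_orbit: "is_regulus (G2_orbit (span2 x y) \<union> {ell})"
proof -
  let ?R = "{L. solid_line L \<and> (\<forall>m \<in> transversals ell (orbit_line 0) (orbit_line 1). meets L m)}"
  have orbit: "G2_orbit (span2 x y) = range orbit_line" unfolding G2_orbit_def orbit_line_def by auto
  have "ell \<in> ?R" using solid_line_ell unfolding transversals_def meets_def by blast
  moreover have "orbit_line s \<in> ?R" for s
    using solid_line_orbit_line orbit_line_meets_transversals by blast
  moreover have "L = ell \<or> L \<in> range orbit_line" if "L \<in> ?R" for L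
    using that line_meeting_transversals by blast
  ultimately have "G2_orbit (span2 x y) \<union> {ell} = ?R" unfolding orbit by blast
  then show ?thesis unfolding is_regulus_def
    by (intro exI[of _ ell] exI[of _ "orbit_line 0"] exI[of _ "orbit_line 1"] conjI)
      (simp_all add: solid_line_ell solid_line_orbit_line ell_skew_orbit_line orbit_lines_skew)
qed

end

subsection \<open>Lines of \<open>\<T>\<close> are skew to \<open>\<ell>\<close>\<close>

definition Qform :: "('a::field)^5 \<Rightarrow> 'a" where
  "Qform z = z $ 2 * z $ 5 + z $ 3 * z $ 4"

lemma Qform_add: "Qform (u + v) = Qform u + Qform v + Bform u v"
  by (simp add: Qform_def Bform_def algebra_simps)

lemma T_line_skew_ell:
  assumes "t \<in> T_lines" "z \<in> t" "z \<in> ell"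
  shows "z = 0"
proof (rule ccontr)
  assume "z \<noteq> 0"
  define S where "S = {ppoint x | x. x \<in> t \<and> x \<in> Hq \<and> x \<notin> ell}"
  have W: "W_line t" and "card S = 1" using assms(1) unfolding T_lines_def S_def mem_Collect_eq
    by (rule conjunct1, rule conjunct2)
  from \<open>card S = 1\<close> obtain p where Sp: "S = {p}" by (rule card_1_singletonE)
  then have "p \<in> S" by simp
  then obtain w where p: "p = ppoint w" and w: "w \<in> t" "w \<in> Hq" "w \<notin> ell"
    unfolding S_def by blast
  have S: "S = {ppoint w}" using Sp p by simp
  obtain x y where t: "t = span2 x y" using W unfolding W_line_def by (auto elim: solid_lineE)
  have z: "z $ 1 = 0" "z $ 4 = 0" "z $ 5 = 0" using assms(3) unfolding ell_def by auto
  have w1: "w $ 1 = 0" and wQ: "Qform w = 0" using w(2) unfolding Hq_def Sigma_solid_def Qform_def by auto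
  have w45: "w $ 4 \<noteq> 0 \<or> w $ 5 \<noteq> 0" using w(3) w1 unfolding ell_def by auto
  have "Bform z w = 0" using W assms(2) w(1) unfolding W_line_def by blast
  then have "Qform (z + w) = 0" unfolding Qform_add using wQ z by (simp add: Qform_def)
  moreover have zw45: "(z + w) $ 4 = w $ 4" "(z + w) $ 5 = w $ 5" using z by simp_all
  then have "z + w \<noteq> 0" using w45 by (metis zero_index)
  ultimately have "z + w \<in> Hq" using z w1 unfolding Qform_def Hq_def Sigma_solid_def by simp
  moreover have "z + w \<in> t" using assms(2) w(1) unfolding t by (rule span2_add)
  moreover have "z + w \<notin> ell" using w45 zw45 unfolding ell_def by auto
  ultimately have "ppoint (z + w) \<in> S" unfolding S_def by blast
  then have "ppoint (z + w) = ppoint w" using S by blast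
  moreover have "z + w \<in> ppoint (z + w)" unfolding ppoint_def by (metis (mono_tags) mem_Collect_eq vsmult_1)
  ultimately obtain k where k: "z + w = vsmult k w" unfolding ppoint_def by blast
  then have "w $ 4 = k * w $ 4" "w $ 5 = k * w $ 5" using zw45 by (metis vsmult_nth)+
  then have "k = 1" using w45 by auto
  with k \<open>z \<noteq> 0\<close> show False by simp
qed

theorem lemma3p2:
  fixes h :: nat and t :: "('a::{field,finite} ^5) set"
  assumes "CARD('a) = 2 ^ h"
    and "t \<in> T_lines"
  shows "is_regulus (G2_orbit t \<union> {ell})"
proof -
  obtain x y where t: "t = span2 x y" "indep x y" "x $ 1 = 0" "y $ 1 = 0"
    using assms(2) unfolding T_lines_def W_line_def by (auto elim: solid_lineE)
  have "skew_pair x y"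
  proof
    fix c d assume "c * x$4 + d * y$4 = 0" "c * x$5 + d * y$5 = 0"
    then have "vsmult c x + vsmult d y \<in> ell" unfolding ell_def using t(3,4) by simp
    then have "vsmult c x + vsmult d y = 0"
      using T_line_skew_ell[OF assms(2)] span2_memI unfolding t(1) by blast
    with t(2) show "c = 0 \<and> d = 0" by (rule indepD)
  qed (use t in simp_all)
  then show ?thesis unfolding t(1) by (rule skew_pair.regulus_orbit)
qed

end
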